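(* (1) For every finitely complete category $\mathbb E$, any internal unitary magma in $\mathbb E$ that carries an internal opimplicative subtraction structure in the category of internal unitary magmas is isomorphic to the terminal object; the same holds for internal implicative opsubtractions. (2) If $X$ is a topological space with a continuous binary operation $s$ and a point $0$ satisfying the opimplicative subtraction identities (resp. the implicative opsubtraction identities), then $\pi_1(X,0)$ is trivial. (3) If $X$ is a topological space with a continuous ternary operation $p$ satisfying $p(x,y,y)=x=p(y,y,x)$ and the Pixley identity $p(x,y,x)=x$, then $\pi_1(X,x_0)$ is trivial for every point $x_0\in X$.
   Context: An opimplicative subtraction is a set with a binary operation $s$ and a constant $0$ such that $s(x,x)=0$, $s(x,0)=x$ and $s(0,x)=0$. An implicative opsubtraction is a set with a binary operation $s$ and constant $0$ such that $s(x,x)=0$, $s(0,x)=x$ and $s(x,0)=0$. A unitary magma is a set with binary operation $*$ and constant $1$ with $x*1=x=1*x$. Internal structures in a finitely complete category are defined diagrammatically via finite products. *)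

theory Defs
  imports "HOL-Analysis.Analysis"
begin

record ('o, 'm) cat =
  Obj  :: "'o set"
  Arr  :: "'m set"
  Dom  :: "'m \<Rightarrow> 'o"
  Cod  :: "'m \<Rightarrow> 'o"
  Id   :: "'o \<Rightarrow> 'm"
  Comp :: "'m \<Rightarrow> 'm \<Rightarrow> 'm"   (* Comp C g f = g o f *)

definition hom :: "('o, 'm) cat \<Rightarrow> 'o \<Rightarrow> 'o \<Rightarrow> 'm set" where
  "hom C a b = {f \<in> Arr C. Dom C f = a \<and> Cod C f = b}"

definition is_category :: "('o, 'm) cat \<Rightarrow> bool" where
  "is_category C \<longleftrightarrow>
     (\<forall>f \<in> Arr C. Dom C f \<in> Obj C \<and> Cod C f \<in> Obj C) \<and>
     (\<forall>a \<in> Obj C. Id C a \<in> hom C a a) \<and>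
     (\<forall>f \<in> Arr C. \<forall>g \<in> Arr C. Cod C f = Dom C g \<longrightarrow>
         Comp C g f \<in> hom C (Dom C f) (Cod C g)) \<and>
     (\<forall>f \<in> Arr C. Comp C f (Id C (Dom C f)) = f \<and> Comp C (Id C (Cod C f)) f = f) \<and>
     (\<forall>f \<in> Arr C. \<forall>g \<in> Arr C. \<forall>h \<in> Arr C. Cod C f = Dom C g \<and> Cod C g = Dom C h \<longrightarrow>
         Comp C h (Comp C g f) = Comp C (Comp C h g) f)"

definition is_terminal :: "('o, 'm) cat \<Rightarrow> 'o \<Rightarrow> bool" where
  "is_terminal C t \<longleftrightarrow> t \<in> Obj C \<and> (\<forall>a \<in> Obj C. \<exists>!f. f \<in> hom C a t)"

definition is_product :: "('o, 'm) cat \<Rightarrow> 'o \<Rightarrow> 'o \<Rightarrow> 'o \<Rightarrow> 'm \<Rightarrow> 'm \<Rightarrow> bool" where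
  "is_product C a b p p1 p2 \<longleftrightarrow>
     p \<in> Obj C \<and> p1 \<in> hom C p a \<and> p2 \<in> hom C p b \<and>
     (\<forall>c \<in> Obj C. \<forall>f \<in> hom C c a. \<forall>g \<in> hom C c b.
        \<exists>!h. h \<in> hom C c p \<and> Comp C p1 h = f \<and> Comp C p2 h = g)"

definition is_equalizer :: "('o, 'm) cat \<Rightarrow> 'm \<Rightarrow> 'm \<Rightarrow> 'm \<Rightarrow> bool" where
  "is_equalizer C f g e \<longleftrightarrow>
     e \<in> hom C (Dom C e) (Dom C f) \<and> Comp C f e = Comp C g e \<and>
     (\<forall>x \<in> Arr C. Cod C x = Dom C f \<and> Comp C f x = Comp C g x \<longrightarrow>
        (\<exists>!u. u \<in> hom C (Dom C x) (Dom C e) \<and> Comp C e u = x))"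

definition finitely_complete :: "('o, 'm) cat \<Rightarrow> bool" where
  "finitely_complete C \<longleftrightarrow> is_category C \<and>
     (\<exists>t. is_terminal C t) \<and>
     (\<forall>a \<in> Obj C. \<forall>b \<in> Obj C. \<exists>p p1 p2. is_product C a b p p1 p2) \<and>
     (\<forall>a \<in> Obj C. \<forall>b \<in> Obj C. \<forall>f \<in> hom C a b. \<forall>g \<in> hom C a b. \<exists>e. is_equalizer C f g e)"

definition is_iso_obj :: "('o, 'm) cat \<Rightarrow> 'o \<Rightarrow> 'o \<Rightarrow> bool" where
  "is_iso_obj C a b \<longleftrightarrow> (\<exists>f g. f \<in> hom C a b \<and> g \<in> hom C b a \<and>
      Comp C g f = Id C a \<and> Comp C f g = Id C b)"

definition term_obj :: "('o, 'm) cat \<Rightarrow> 'o" where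
  "term_obj C = (SOME t. is_terminal C t)"

definition bang :: "('o, 'm) cat \<Rightarrow> 'o \<Rightarrow> 'm" where
  "bang C a = (THE f. f \<in> hom C a (term_obj C))"

definition prod_data :: "('o, 'm) cat \<Rightarrow> 'o \<Rightarrow> 'o \<Rightarrow> 'o \<times> 'm \<times> 'm" where
  "prod_data C a b = (SOME (p, p1, p2). is_product C a b p p1 p2)"

definition pobj :: "('o, 'm) cat \<Rightarrow> 'o \<Rightarrow> 'o \<Rightarrow> 'o" where
  "pobj C a b = fst (prod_data C a b)"

definition pr1 :: "('o, 'm) cat \<Rightarrow> 'o \<Rightarrow> 'o \<Rightarrow> 'm" where
  "pr1 C a b = fst (snd (prod_data C a b))"

definition pr2 :: "('o, 'm) cat \<Rightarrow> 'o \<Rightarrow> 'o \<Rightarrow> 'm" where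
  "pr2 C a b = snd (snd (prod_data C a b))"

definition pair :: "('o, 'm) cat \<Rightarrow> 'o \<Rightarrow> 'o \<Rightarrow> 'm \<Rightarrow> 'm \<Rightarrow> 'm" where
  "pair C a b f g = (THE h. h \<in> hom C (Dom C f) (pobj C a b) \<and>
                             Comp C (pr1 C a b) h = f \<and> Comp C (pr2 C a b) h = g)"

definition int_unitary_magma :: "('o, 'm) cat \<Rightarrow> 'o \<Rightarrow> 'm \<Rightarrow> 'm \<Rightarrow> bool" where
  "int_unitary_magma C M mu e \<longleftrightarrow>
     M \<in> Obj C \<and> mu \<in> hom C (pobj C M M) M \<and> e \<in> hom C (term_obj C) M \<and>
     Comp C mu (pair C M M (Id C M) (Comp C e (bang C M))) = Id C M \<and>
     Comp C mu (pair C M M (Comp C e (bang C M)) (Id C M)) = Id C M"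

text \<open>Multiplication of the product magma \<open>M \<times> M\<close> in the category of internal
  unitary magmas (products there are computed as in the underlying category):
  \<open>((x,y),(z,w)) \<mapsto> (x*z, y*w)\<close>.\<close>
definition prod_mult :: "('o, 'm) cat \<Rightarrow> 'o \<Rightarrow> 'm \<Rightarrow> 'm" where
  "prod_mult C M mu =
     (let P = pobj C M M; q1 = pr1 C P P; q2 = pr2 C P P;
          p1 = pr1 C M M; p2 = pr2 C M M
      in pair C M M
           (Comp C mu (pair C M M (Comp C p1 q1) (Comp C p1 q2)))
           (Comp C mu (pair C M M (Comp C p2 q1) (Comp C p2 q2))))"

definition prod_unit :: "('o, 'm) cat \<Rightarrow> 'o \<Rightarrow> 'm \<Rightarrow> 'm" where
  "prod_unit C M e = pair C M M e e"

definition binop_is_umagma_hom :: "('o, 'm) cat \<Rightarrow> 'o \<Rightarrow> 'm \<Rightarrow> 'm \<Rightarrow> 'm \<Rightarrow> bool" where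
  "binop_is_umagma_hom C M mu e s \<longleftrightarrow>
     (let P = pobj C M M in
       Comp C s (prod_mult C M mu) =
         Comp C mu (pair C M M (Comp C s (pr1 C P P)) (Comp C s (pr2 C P P))) \<and>
       Comp C s (prod_unit C M e) = e)"

text \<open>\<open>z : 1 \<rightarrow> M\<close> is a morphism of internal unitary magmas, where the terminal
  unitary magma is \<open>1\<close> with its unique structure.\<close>
definition const_is_umagma_hom :: "('o, 'm) cat \<Rightarrow> 'o \<Rightarrow> 'm \<Rightarrow> 'm \<Rightarrow> 'm \<Rightarrow> bool" where
  "const_is_umagma_hom C M mu e z \<longleftrightarrow>
     (let T = term_obj C in
       Comp C z (bang C (pobj C T T)) =
         Comp C mu (pair C M M (Comp C z (pr1 C T T)) (Comp C z (pr2 C T T))) \<and>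
       Comp C z (Id C T) = e)"

definition int_opimplicative_subtraction :: "('o, 'm) cat \<Rightarrow> 'o \<Rightarrow> 'm \<Rightarrow> 'm \<Rightarrow> bool" where
  "int_opimplicative_subtraction C M s z \<longleftrightarrow>
     M \<in> Obj C \<and> s \<in> hom C (pobj C M M) M \<and> z \<in> hom C (term_obj C) M \<and>
     Comp C s (pair C M M (Id C M) (Id C M)) = Comp C z (bang C M) \<and>
     Comp C s (pair C M M (Id C M) (Comp C z (bang C M))) = Id C M \<and>
     Comp C s (pair C M M (Comp C z (bang C M)) (Id C M)) = Comp C z (bang C M)"

definition int_implicative_opsubtraction :: "('o, 'm) cat \<Rightarrow> 'o \<Rightarrow> 'm \<Rightarrow> 'm \<Rightarrow> bool" where
  "int_implicative_opsubtraction C M s z \<longleftrightarrow>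
     M \<in> Obj C \<and> s \<in> hom C (pobj C M M) M \<and> z \<in> hom C (term_obj C) M \<and>
     Comp C s (pair C M M (Id C M) (Id C M)) = Comp C z (bang C M) \<and>
     Comp C s (pair C M M (Comp C z (bang C M)) (Id C M)) = Id C M \<and>
     Comp C s (pair C M M (Id C M) (Comp C z (bang C M))) = Comp C z (bang C M)"

text \<open>An internal opimplicative subtraction in the category of internal unitary
  magmas on \<open>(M,mu,e)\<close>: the structure maps are magma morphisms and satisfy the
  identities (checked in the underlying category, since the forgetful functor
  preserves finite products and is faithful).\<close>
definition opimp_subtraction_in_UMag :: "('o, 'm) cat \<Rightarrow> 'o \<Rightarrow> 'm \<Rightarrow> 'm \<Rightarrow> 'm \<Rightarrow> 'm \<Rightarrow> bool" where
  "opimp_subtraction_in_UMag C M mu e s z \<longleftrightarrow>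
     int_unitary_magma C M mu e \<and> int_opimplicative_subtraction C M s z \<and>
     binop_is_umagma_hom C M mu e s \<and> const_is_umagma_hom C M mu e z"

definition imp_opsubtraction_in_UMag :: "('o, 'm) cat \<Rightarrow> 'o \<Rightarrow> 'm \<Rightarrow> 'm \<Rightarrow> 'm \<Rightarrow> 'm \<Rightarrow> bool" where
  "imp_opsubtraction_in_UMag C M mu e s z \<longleftrightarrow>
     int_unitary_magma C M mu e \<and> int_implicative_opsubtraction C M s z \<and>
     binop_is_umagma_hom C M mu e s \<and> const_is_umagma_hom C M mu e z"

definition trivial_pi1 :: "'a topology \<Rightarrow> 'a \<Rightarrow> bool" where
  "trivial_pi1 X x0 \<longleftrightarrow>
     (\<forall>p. pathin X p \<and> p 0 = x0 \<and> p 1 = x0 \<longrightarrow>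
        homotopic_with (\<lambda>q. q 0 = x0 \<and> q 1 = x0) (top_of_set {0..1}) X p (\<lambda>_. x0))"

end

theory Submission
  imports Defs
begin

text \<open>
  As the constant \<open>0\<close> is a magma morphism, it is the unit \<open>1\<close>. So if
  \<open>s(x,1) = x\<close> and \<open>s(1,x) = 1\<close> (or the symmetric identities) and \<open>s\<close> is a magma
  morphism, then
  \<open>s(x,x) = s((x,1)(1,x)) = s(x,1) s(1,x) = x\<close>; since also \<open>s(x,x) = 1\<close>,
  the identity of \<open>M\<close> factors through the terminal object.
  In the topological setting the unit is not available, but a binary operation \<open>G\<close>
  with \<open>G(x,0) = x\<close>, \<open>G(x,x) = 0\<close>, \<open>G(0,x) = 0\<close> contracts any loop \<open>p\<close> at \<open>0\<close>
  via \<open>(u,t) \<mapsto> G(p t, p(u t))\<close>. A Pixley term \<open>p\<close> yields such an operation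
  \<open>G(x,y) = p(x,y,x\<^sub>0)\<close> at every base point \<open>x\<^sub>0\<close>.
\<close>

lemma trivial_pi1_if_contracting_binop:
  fixes X :: "'a topology"
  assumes cont: "continuous_map (prod_topology X X) X (\<lambda>(x, y). G x y)"
    and "z \<in> topspace X"
    and G: "\<And>x. x \<in> topspace X \<Longrightarrow> G x z = x \<and> G x x = z \<and> G z x = z"
  shows "trivial_pi1 X z"
  unfolding trivial_pi1_def
proof (intro allI impI, elim conjE)
  fix p assume "pathin X p" and p0: "p 0 = z" and p1: "p 1 = z"
  then have p: "continuous_map (top_of_set {0..1}) X p" by (simp add: pathin_def)
  have p_in: "p t \<in> topspace X" if "t \<in> {0..1}" for t
    using p that by (auto simp: continuous_map_def)
  let ?I = "top_of_set {0..1::real}"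
  have mult: "continuous_map (prod_topology ?I ?I) ?I (\<lambda>(u, t). u * t)"
    by (auto simp: case_prod_unfold mult_le_one intro!: continuous_intros)
  have "continuous_map (prod_topology ?I ?I) X (\<lambda>(u, t). p (u * t))"
    using continuous_map_compose[OF mult p] by (simp add: o_def case_prod_unfold)
  moreover have "continuous_map (prod_topology ?I ?I) X (\<lambda>(u, t). p t)"
    using continuous_map_compose[OF continuous_map_snd[of ?I ?I] p]
    by (simp add: o_def case_prod_unfold)
  ultimately have paths:
    "continuous_map (prod_topology ?I ?I) (prod_topology X X) (\<lambda>(u, t). (p t, p (u * t)))"
    by (simp add: continuous_map_pairedI case_prod_unfold)
  have "continuous_map (prod_topology ?I ?I) X (\<lambda>(u, t). G (p t) (p (u * t)))"
    using continuous_map_compose[OF paths cont] by (simp add: o_def case_prod_unfold)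
  then show "homotopic_with (\<lambda>q. q 0 = z \<and> q 1 = z) ?I X p (\<lambda>_. z)"
    using G p_in p0 p1
    by (subst homotopic_with) (auto intro!: exI[of _ "\<lambda>(u, t). G (p t) (p (u * t))"])
qed

lemma continuous_map_swap_binop:
  assumes "continuous_map (prod_topology X Y) Z (\<lambda>(x, y). f x y)"
  shows "continuous_map (prod_topology Y X) Z (\<lambda>(y, x). f x y)"
  using continuous_map_compose[OF continuous_map_pairedI[OF continuous_map_snd continuous_map_fst] assms]
  by (simp add: o_def case_prod_unfold)

lemma continuous_map_fix_third:
  assumes "continuous_map (prod_topology X (prod_topology X X)) X (\<lambda>(x, y, w). f x y w)"
    and "c \<in> topspace X"
  shows "continuous_map (prod_topology X X) X (\<lambda>(x, y). f x y c)"
proof -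
  have "continuous_map (prod_topology X X) (prod_topology X (prod_topology X X)) (\<lambda>(x, y). (x, y, c))"
    using assms(2) by (simp add: case_prod_unfold continuous_intros)
  from continuous_map_compose[OF this assms(1)] show ?thesis
    by (simp add: o_def case_prod_unfold)
qed

locale finitely_complete_category =
  fixes C :: "('o, 'm) cat"
  assumes finitely_complete: "finitely_complete C"
begin

lemma category: "is_category C"
  using finitely_complete by (simp add: finitely_complete_def)

lemma hom_objs: "f \<in> hom C a b \<Longrightarrow> a \<in> Obj C \<and> b \<in> Obj C"
  using category by (auto simp: is_category_def hom_def)

lemma comp_in_hom: "f \<in> hom C a b \<Longrightarrow> g \<in> hom C b c \<Longrightarrow> Comp C g f \<in> hom C a c"
  using category unfolding is_category_def hom_def by auto

lemma id_in_hom: "a \<in> Obj C \<Longrightarrow> Id C a \<in> hom C a a"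
  using category unfolding is_category_def by auto

lemma comp_id_right: "f \<in> hom C a b \<Longrightarrow> Comp C f (Id C a) = f"
  using category unfolding is_category_def hom_def by auto

lemma comp_assoc:
  "f \<in> hom C a b \<Longrightarrow> g \<in> hom C b c \<Longrightarrow> h \<in> hom C c d \<Longrightarrow>
   Comp C h (Comp C g f) = Comp C (Comp C h g) f"
  using category unfolding is_category_def hom_def by auto

lemma terminal_term_obj: "is_terminal C (term_obj C)"
  using finitely_complete unfolding finitely_complete_def term_obj_def by (metis someI_ex)

lemma term_obj_in_Obj: "term_obj C \<in> Obj C"
  using terminal_term_obj by (simp add: is_terminal_def)

lemma bang_in_hom: "a \<in> Obj C \<Longrightarrow> bang C a \<in> hom C a (term_obj C)"
  using terminal_term_obj unfolding is_terminal_def bang_def by (metis theI')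

lemma bang_unique: "f \<in> hom C a (term_obj C) \<Longrightarrow> f = bang C a"
  using terminal_term_obj bang_in_hom hom_objs unfolding is_terminal_def by metis

lemma product_pobj:
  assumes "a \<in> Obj C" "b \<in> Obj C"
  shows "is_product C a b (pobj C a b) (pr1 C a b) (pr2 C a b)"
proof -
  have "\<exists>x. case x of (p, p1, p2) \<Rightarrow> is_product C a b p p1 p2"
    using assms finitely_complete unfolding finitely_complete_def by auto
  then have "case prod_data C a b of (p, p1, p2) \<Rightarrow> is_product C a b p p1 p2"
    unfolding prod_data_def by (rule someI_ex)
  then show ?thesis unfolding pobj_def pr1_def pr2_def by (auto split: prod.splits)
qed

lemma pobj_in_Obj: "a \<in> Obj C \<Longrightarrow> b \<in> Obj C \<Longrightarrow> pobj C a b \<in> Obj C"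
  using product_pobj by (simp add: is_product_def)

lemma pr1_in_hom: "a \<in> Obj C \<Longrightarrow> b \<in> Obj C \<Longrightarrow> pr1 C a b \<in> hom C (pobj C a b) a"
  using product_pobj by (simp add: is_product_def)

lemma pr2_in_hom: "a \<in> Obj C \<Longrightarrow> b \<in> Obj C \<Longrightarrow> pr2 C a b \<in> hom C (pobj C a b) b"
  using product_pobj by (simp add: is_product_def)

lemma pairing_ex1:
  assumes "f \<in> hom C c a" "g \<in> hom C c b"
  shows "\<exists>!h. h \<in> hom C c (pobj C a b) \<and> Comp C (pr1 C a b) h = f \<and> Comp C (pr2 C a b) h = g"
  using assms hom_objs[OF assms(1)] hom_objs[OF assms(2)] product_pobj
  unfolding is_product_def by blast

lemma pair_spec:
  assumes f: "f \<in> hom C c a" and g: "g \<in> hom C c b"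
  shows "pair C a b f g \<in> hom C c (pobj C a b) \<and>
    Comp C (pr1 C a b) (pair C a b f g) = f \<and> Comp C (pr2 C a b) (pair C a b f g) = g"
proof -
  have "Dom C f = c" using f by (simp add: hom_def)
  then show ?thesis unfolding pair_def using theI'[OF pairing_ex1[OF f g]] by simp
qed

lemma pair_in_hom: "f \<in> hom C c a \<Longrightarrow> g \<in> hom C c b \<Longrightarrow> pair C a b f g \<in> hom C c (pobj C a b)"
  using pair_spec by blast

lemma pr1_pair: "f \<in> hom C c a \<Longrightarrow> g \<in> hom C c b \<Longrightarrow> Comp C (pr1 C a b) (pair C a b f g) = f"
  using pair_spec by blast

lemma pr2_pair: "f \<in> hom C c a \<Longrightarrow> g \<in> hom C c b \<Longrightarrow> Comp C (pr2 C a b) (pair C a b f g) = g"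
  using pair_spec by blast

lemma pair_unique:
  assumes "f \<in> hom C c a" "g \<in> hom C c b" "h \<in> hom C c (pobj C a b)"
    and "Comp C (pr1 C a b) h = f" "Comp C (pr2 C a b) h = g"
  shows "pair C a b f g = h"
  using pairing_ex1[OF assms(1,2)] pair_spec[OF assms(1,2)] assms(3-) by blast

lemma pair_comp:
  assumes f: "f \<in> hom C c a" and g: "g \<in> hom C c b" and k: "k \<in> hom C d c"
  shows "Comp C (pair C a b f g) k = pair C a b (Comp C f k) (Comp C g k)"
proof (rule sym, rule pair_unique)
  have ab: "a \<in> Obj C" "b \<in> Obj C" using hom_objs f g by auto
  show "Comp C (pair C a b f g) k \<in> hom C d (pobj C a b)"
    using comp_in_hom[OF k pair_in_hom[OF f g]] .
  show "Comp C (pr1 C a b) (Comp C (pair C a b f g) k) = Comp C f k"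
    using comp_assoc[OF k pair_in_hom[OF f g] pr1_in_hom[OF ab]] pr1_pair[OF f g] by simp
  show "Comp C (pr2 C a b) (Comp C (pair C a b f g) k) = Comp C g k"
    using comp_assoc[OF k pair_in_hom[OF f g] pr2_in_hom[OF ab]] pr2_pair[OF f g] by simp
qed (use comp_in_hom[OF k f] comp_in_hom[OF k g] in auto)

lemma pair_pr_comp_pair:
  assumes f: "f \<in> hom C p a" and g: "g \<in> hom C q b"
    and x: "x \<in> hom C c p" and y: "y \<in> hom C c q"
  shows "Comp C (pair C a b (Comp C f (pr1 C p q)) (Comp C g (pr2 C p q))) (pair C p q x y)
       = pair C a b (Comp C f x) (Comp C g y)"
proof -
  have pq: "p \<in> Obj C" "q \<in> Obj C" using hom_objs f g by auto
  note pr = pr1_in_hom[OF pq] pr2_in_hom[OF pq] and xy = pair_in_hom[OF x y]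
  show ?thesis
    using pair_comp[OF comp_in_hom[OF pr(1) f] comp_in_hom[OF pr(2) g] xy]
      comp_assoc[OF xy pr(1) f] comp_assoc[OF xy pr(2) g] pr1_pair[OF x y] pr2_pair[OF x y]
    by simp
qed

lemma prod_mult_comp_pair:
  assumes M: "M \<in> Obj C" and mu: "mu \<in> hom C (pobj C M M) M"
    and x: "x \<in> hom C c (pobj C M M)" and y: "y \<in> hom C c (pobj C M M)"
  shows "Comp C (prod_mult C M mu) (pair C (pobj C M M) (pobj C M M) x y) =
    pair C M M (Comp C mu (pair C M M (Comp C (pr1 C M M) x) (Comp C (pr1 C M M) y)))
               (Comp C mu (pair C M M (Comp C (pr2 C M M) x) (Comp C (pr2 C M M) y)))"
proof -
  let ?P = "pobj C M M"
  have P: "?P \<in> Obj C" using pobj_in_Obj[OF M M] .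
  note q = pr1_in_hom[OF P P] pr2_in_hom[OF P P] and p = pr1_in_hom[OF M M] pr2_in_hom[OF M M]
  define A where "A = pair C M M (Comp C (pr1 C M M) (pr1 C ?P ?P)) (Comp C (pr1 C M M) (pr2 C ?P ?P))"
  define B where "B = pair C M M (Comp C (pr2 C M M) (pr1 C ?P ?P)) (Comp C (pr2 C M M) (pr2 C ?P ?P))"
  have A: "A \<in> hom C (pobj C ?P ?P) ?P" and B: "B \<in> hom C (pobj C ?P ?P) ?P"
    unfolding A_def B_def using pair_in_hom comp_in_hom q p by meson+
  have xy: "pair C ?P ?P x y \<in> hom C c (pobj C ?P ?P)" using pair_in_hom[OF x y] .
  have "prod_mult C M mu = pair C M M (Comp C mu A) (Comp C mu B)"
    unfolding prod_mult_def A_def B_def Let_def ..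
  then show ?thesis
    using pair_comp[OF comp_in_hom[OF A mu] comp_in_hom[OF B mu] xy]
      comp_assoc[OF xy A mu] comp_assoc[OF xy B mu]
      pair_pr_comp_pair[OF p(1) p(1) x y] pair_pr_comp_pair[OF p(2) p(2) x y]
    unfolding A_def B_def by simp
qed

lemma prod_mult_in_hom:
  assumes M: "M \<in> Obj C" and mu: "mu \<in> hom C (pobj C M M) M"
  shows "prod_mult C M mu \<in> hom C (pobj C (pobj C M M) (pobj C M M)) (pobj C M M)"
proof -
  let ?P = "pobj C M M"
  have P: "?P \<in> Obj C" using pobj_in_Obj[OF M M] .
  note pr = pr1_in_hom[OF P P] pr2_in_hom[OF P P] pr1_in_hom[OF M M] pr2_in_hom[OF M M]
  show ?thesis
    unfolding prod_mult_def Let_def using pr mu by (meson pair_in_hom comp_in_hom)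
qed

lemma umagma_hom_diagonal:
  assumes um: "int_unitary_magma C M mu e" and s: "s \<in> hom C (pobj C M M) M"
    and hom: "binop_is_umagma_hom C M mu e s"
  shows "Comp C s (pair C M M (Id C M) (Id C M)) =
    Comp C mu (pair C M M (Comp C s (pair C M M (Id C M) (Comp C e (bang C M))))
                          (Comp C s (pair C M M (Comp C e (bang C M)) (Id C M))))"
proof -
  let ?P = "pobj C M M" and ?E = "Comp C e (bang C M)"
  have M: "M \<in> Obj C" and mu: "mu \<in> hom C ?P M" and e: "e \<in> hom C (term_obj C) M"
    and unit_r: "Comp C mu (pair C M M (Id C M) ?E) = Id C M"
    and unit_l: "Comp C mu (pair C M M ?E (Id C M)) = Id C M"
    using um unfolding int_unitary_magma_def by auto
  have P: "?P \<in> Obj C" using pobj_in_Obj[OF M M] .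
  note q = pr1_in_hom[OF P P] pr2_in_hom[OF P P]
  have id: "Id C M \<in> hom C M M" and E: "?E \<in> hom C M M"
    using id_in_hom[OF M] comp_in_hom[OF bang_in_hom[OF M] e] by auto
  define a where "a = pair C M M (Id C M) ?E"
  define b where "b = pair C M M ?E (Id C M)"
  have a: "a \<in> hom C M ?P" and b: "b \<in> hom C M ?P"
    unfolding a_def b_def using pair_in_hom id E by auto
  define k where "k = pair C ?P ?P a b"
  have k: "k \<in> hom C M (pobj C ?P ?P)" unfolding k_def using pair_in_hom[OF a b] .
  have mult_k: "Comp C (prod_mult C M mu) k = pair C M M (Id C M) (Id C M)"
    using prod_mult_comp_pair[OF M mu a b] unit_r unit_l
      pr1_pair[OF id E] pr2_pair[OF id E] pr1_pair[OF E id] pr2_pair[OF E id]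
    unfolding k_def a_def b_def by simp
  have s_pr: "Comp C s (pr1 C ?P ?P) \<in> hom C (pobj C ?P ?P) M"
    "Comp C s (pr2 C ?P ?P) \<in> hom C (pobj C ?P ?P) M"
    using comp_in_hom q s by blast+
  have "Comp C s (pair C M M (Id C M) (Id C M)) = Comp C (Comp C s (prod_mult C M mu)) k"
    using comp_assoc[OF k prod_mult_in_hom[OF M mu] s] mult_k by simp
  also have "\<dots> = Comp C mu (Comp C (pair C M M (Comp C s (pr1 C ?P ?P)) (Comp C s (pr2 C ?P ?P))) k)"
    using hom comp_assoc[OF k pair_in_hom[OF s_pr] mu]
    unfolding binop_is_umagma_hom_def Let_def by simp
  also have "\<dots> = Comp C mu (pair C M M (Comp C s a) (Comp C s b))"
    using pair_pr_comp_pair[OF s s a b] unfolding k_def by simp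
  finally show ?thesis unfolding a_def b_def .
qed
lemma const_umagma_hom_eq_unit:
  assumes "z \<in> hom C (term_obj C) M" and "const_is_umagma_hom C M mu e z"
  shows "z = e"
  using assms comp_id_right unfolding const_is_umagma_hom_def Let_def by metis

lemma iso_terminal_if_point_factors_id:
  assumes e: "e \<in> hom C (term_obj C) M" and factor: "Comp C e (bang C M) = Id C M"
  shows "is_iso_obj C M (term_obj C)"
proof -
  have M: "M \<in> Obj C" using hom_objs[OF e] by simp
  have "Comp C (bang C M) e = Id C (term_obj C)"
    using bang_unique comp_in_hom[OF e bang_in_hom[OF M]] id_in_hom[OF term_obj_in_Obj] by metis
  then show ?thesis
    unfolding is_iso_obj_def using bang_in_hom[OF M] e factor by blast
qed

lemma iso_terminal_if_diagonal_umagma_hom: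
  assumes um: "int_unitary_magma C M mu e" and s: "s \<in> hom C (pobj C M M) M"
    and hom: "binop_is_umagma_hom C M mu e s"
    and diag: "Comp C s (pair C M M (Id C M) (Id C M)) = Comp C e (bang C M)"
    and unit: "Comp C mu (pair C M M (Comp C s (pair C M M (Id C M) (Comp C e (bang C M))))
                                    (Comp C s (pair C M M (Comp C e (bang C M)) (Id C M)))) = Id C M"
  shows "is_iso_obj C M (term_obj C)"
proof -
  have "Comp C e (bang C M) = Id C M"
    using umagma_hom_diagonal[OF um s hom] diag unit by simp
  moreover have "e \<in> hom C (term_obj C) M" using um unfolding int_unitary_magma_def by simp
  ultimately show ?thesis using iso_terminal_if_point_factors_id by blast
qed

lemma opimp_subtraction_in_UMag_iso_terminal:
  assumes "opimp_subtraction_in_UMag C M mu e s z"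
  shows "is_iso_obj C M (term_obj C)"
proof -
  have um: "int_unitary_magma C M mu e" and sub: "int_opimplicative_subtraction C M s z"
    and hom: "binop_is_umagma_hom C M mu e s" and "const_is_umagma_hom C M mu e z"
    using assms unfolding opimp_subtraction_in_UMag_def by auto
  then have "z = e"
    using const_umagma_hom_eq_unit unfolding int_opimplicative_subtraction_def by blast
  then show ?thesis
    using iso_terminal_if_diagonal_umagma_hom[OF um _ hom] sub um
    unfolding int_opimplicative_subtraction_def int_unitary_magma_def by simp
qed

lemma imp_opsubtraction_in_UMag_iso_terminal:
  assumes "imp_opsubtraction_in_UMag C M mu e s z"
  shows "is_iso_obj C M (term_obj C)"
proof -
  have um: "int_unitary_magma C M mu e" and sub: "int_implicative_opsubtraction C M s z"
    and hom: "binop_is_umagma_hom C M mu e s" and "const_is_umagma_hom C M mu e z"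
    using assms unfolding imp_opsubtraction_in_UMag_def by auto
  then have "z = e"
    using const_umagma_hom_eq_unit unfolding int_implicative_opsubtraction_def by blast
  then show ?thesis
    using iso_terminal_if_diagonal_umagma_hom[OF um _ hom] sub um
    unfolding int_implicative_opsubtraction_def int_unitary_magma_def by simp
qed

end

theorem mainTheorem16:
  shows "(\<forall>(C :: ('o, 'm) cat) M mu e s z.
            finitely_complete C \<and> opimp_subtraction_in_UMag C M mu e s z
              \<longrightarrow> is_iso_obj C M (term_obj C)) \<and>
         (\<forall>(C :: ('o, 'm) cat) M mu e s z.
            finitely_complete C \<and> imp_opsubtraction_in_UMag C M mu e s z
              \<longrightarrow> is_iso_obj C M (term_obj C)) \<and>
         (\<forall>(X :: 'a topology) s z.
            continuous_map (prod_topology X X) X (\<lambda>(x, y). s x y) \<and> z \<in> topspace X \<and>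
            (\<forall>x \<in> topspace X. s x x = z \<and> s x z = x \<and> s z x = z)
              \<longrightarrow> trivial_pi1 X z) \<and>
         (\<forall>(X :: 'a topology) s z.
            continuous_map (prod_topology X X) X (\<lambda>(x, y). s x y) \<and> z \<in> topspace X \<and>
            (\<forall>x \<in> topspace X. s x x = z \<and> s z x = x \<and> s x z = z)
              \<longrightarrow> trivial_pi1 X z) \<and>
         (\<forall>(X :: 'b topology) p.
            continuous_map (prod_topology X (prod_topology X X)) X (\<lambda>(x, y, w). p x y w) \<and>
            (\<forall>x \<in> topspace X. \<forall>y \<in> topspace X. p x y y = x \<and> p y y x = x \<and> p x y x = x)
              \<longrightarrow> (\<forall>x0 \<in> topspace X. trivial_pi1 X x0))"
proof (intro conjI allI impI ballI; elim conjE)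
  fix C :: "('o, 'm) cat" and M mu e s z
  assume "finitely_complete C" "opimp_subtraction_in_UMag C M mu e s z"
  then show "is_iso_obj C M (term_obj C)"
    using finitely_complete_category.opimp_subtraction_in_UMag_iso_terminal
    by (metis finitely_complete_category.intro)
next
  fix C :: "('o, 'm) cat" and M mu e s z
  assume "finitely_complete C" "imp_opsubtraction_in_UMag C M mu e s z"
  then show "is_iso_obj C M (term_obj C)"
    using finitely_complete_category.imp_opsubtraction_in_UMag_iso_terminal
    by (metis finitely_complete_category.intro)
next
  fix X :: "'a topology" and s z
  assume "continuous_map (prod_topology X X) X (\<lambda>(x, y). s x y)" "z \<in> topspace X"
    "\<forall>x \<in> topspace X. s x x = z \<and> s x z = x \<and> s z x = z"
  then show "trivial_pi1 X z"
    by (simp add: trivial_pi1_if_contracting_binop)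
next
  fix X :: "'a topology" and s z
  assume "continuous_map (prod_topology X X) X (\<lambda>(x, y). s x y)" "z \<in> topspace X"
    "\<forall>x \<in> topspace X. s x x = z \<and> s z x = x \<and> s x z = z"
  then show "trivial_pi1 X z"
    by (simp add: trivial_pi1_if_contracting_binop[of X "\<lambda>x y. s y x"] continuous_map_swap_binop)
next
  fix X :: "'b topology" and p x0
  assume "continuous_map (prod_topology X (prod_topology X X)) X (\<lambda>(x, y, w). p x y w)"
    "\<forall>x \<in> topspace X. \<forall>y \<in> topspace X. p x y y = x \<and> p y y x = x \<and> p x y x = x"
    "x0 \<in> topspace X"
  then show "trivial_pi1 X x0"
    by (simp add: trivial_pi1_if_contracting_binop[of X "\<lambda>x y. p x y x0"] continuous_map_fix_third)
qed

end
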